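(* Let $q$ be a prime power and $n=q^4-1$. For $0\le a<q-1$ and $0\le b<q$, $$[(a,b,a,b),(a+1,b,a+1,b)]_M=\{(i,j,a,b):\ 0\le i<q \text{ and } b<j<q,\ \text{or}\ a<i<q \text{ and } j=b\}.$$ For $0\le b\le q-2$, $$[(q-1,b,q-1,b),(0,b+1,0,b+1)]_M=\{(i,j,q-1,b):\ 0\le i<q \text{ and } b<j<q\}.$$
   Context: Identify $\mathbb{Z}_n$ with $\{0,\ldots,n-1\}$. The $q$-adic 4-tuple $(a_0,a_1,a_2,a_3)$ denotes the integer $a_0+a_1q+a_2q^2+a_3q^3$ with $0\le a_i<q$. The cyclotomic coset of $x$ with respect to $q^2$ is $I_x=\{x,\,q^2x\bmod n\}$; $x$ is its minimal representative if it is its least element. The cosets of cardinality one are exactly those of elements $(a,b,a,b)$. An interlude is the set of integers lying strictly between two consecutive elements of cardinality-one cosets that are minimal representatives of cosets of cardinality $2$: for $0\le a<q-1$, $0\le b<q$, $[(a,b,a,b),(a+1,b,a+1,b)]_M$ is the set of integers $x$ with $(a,b,a,b)<x<(a+1,b,a+1,b)$ that are minimal representatives of a coset of cardinality $2$; for $0\le b\le q-2$, $[(q-1,b,q-1,b),(0,b+1,0,b+1)]_M$ is the set of integers $x$ with $(q-1,b,q-1,b)<x<(0,b+1,0,b+1)$ and $x<q^2x \bmod n$. *)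

theory Defs
  imports "HOL-Computational_Algebra.Primes"
begin

definition prime_power :: "nat \<Rightarrow> bool" where
  "prime_power q \<longleftrightarrow> (\<exists>p k. prime p \<and> k > 0 \<and> q = p ^ k)"

definition qadic4 :: "nat \<Rightarrow> nat \<Rightarrow> nat \<Rightarrow> nat \<Rightarrow> nat \<Rightarrow> nat" where
  "qadic4 q a0 a1 a2 a3 = a0 + a1 * q + a2 * q^2 + a3 * q^3"

definition cyc_coset :: "nat \<Rightarrow> nat \<Rightarrow> nat \<Rightarrow> nat set" where
  "cyc_coset q n x = {x, (q^2 * x) mod n}"

definition min_rep :: "nat \<Rightarrow> nat \<Rightarrow> nat \<Rightarrow> bool" where
  "min_rep q n x \<longleftrightarrow> x = Min (cyc_coset q n x)"

definition interlude1 :: "nat \<Rightarrow> nat \<Rightarrow> nat \<Rightarrow> nat set" where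
  "interlude1 q a b = {x. x < q^4 - 1 \<and> qadic4 q a b a b < x \<and> x < qadic4 q (a+1) b (a+1) b
      \<and> min_rep q (q^4 - 1) x \<and> card (cyc_coset q (q^4 - 1) x) = 2}"

definition interlude2 :: "nat \<Rightarrow> nat \<Rightarrow> nat set" where
  "interlude2 q b = {x. x < q^4 - 1 \<and> qadic4 q (q-1) b (q-1) b < x \<and> x < qadic4 q 0 (b+1) 0 (b+1)
      \<and> x < (q^2 * x) mod (q^4 - 1)}"

end

theory Submission
  imports Defs
begin

text \<open>
  Write \<open>Q = q\<^sup>2\<close> and \<open>x = L + Q H\<close> with base-\<open>Q\<close> digits \<open>L, H < Q\<close>. Since
  \<open>Q\<^sup>2 \<equiv> 1\<close> modulo \<open>n = Q\<^sup>2 - 1\<close>, multiplication by \<open>Q\<close> swaps the two digits: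
  \<open>Q x mod n = H + Q L\<close>. Hence \<open>x\<close> is the minimal representative of a coset of size two
  iff \<open>H < L\<close>. The elements \<open>(a,b,a,b)\<close> are the multiples \<open>c (Q + 1)\<close> with \<open>c = a + b q\<close>;
  strictly between two consecutive ones, \<open>H < L\<close> forces \<open>H = c < L\<close>, and writing
  \<open>L = i + j q\<close>, the condition \<open>c < L\<close> says that \<open>(j, i)\<close> exceeds \<open>(b, a)\<close> lexicographically.
\<close>

lemma prime_power_ge_2: "prime_power q \<Longrightarrow> 2 \<le> q"
  unfolding prime_power_def using prime_ge_2_nat self_le_power le_trans
  by (metis One_nat_def Suc_1 Suc_leD)

lemma two_digit_less:
  fixes q i j :: nat
  assumes "i < q" "j < q"
  shows "i + j*q < q^2"
proof -
  have "j*q + q \<le> q*q" using assms(2) by (metis add.commute mult_Suc mult.commute Suc_leI mult_le_mono1)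
  then show ?thesis using assms(1) by (simp add: power2_eq_square)
qed

lemma mult_mod_square_minus_one:
  fixes Q x :: nat
  assumes "x < Q*Q - 1"
  shows "(Q*x) mod (Q*Q - 1) = x div Q + Q*(x mod Q)"
proof -
  define L H where "L = x mod Q" and "H = x div Q"
  have "0 < Q" using assms by (cases Q) auto
  then have x: "x = L + Q*H" and "L < Q" unfolding L_def H_def by simp_all
  have "H < Q" using assms unfolding H_def by (simp add: less_mult_imp_div_less)
  have top: "Q*Q - 1 = (Q - 1) + Q*(Q - 1)" using \<open>0 < Q\<close> by (cases Q) auto
  have "Q*L \<le> Q*(Q - 1)" "H \<le> Q - 1" using \<open>L < Q\<close> \<open>H < Q\<close> by simp_all
  moreover have "Q*L + H \<noteq> Q*Q - 1"
  proof
    assume "Q*L + H = Q*Q - 1"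
    with top \<open>Q*L \<le> Q*(Q - 1)\<close> \<open>H \<le> Q - 1\<close> have "Q*L = Q*(Q - 1)" "H = Q - 1" by linarith+
    then have "x = Q*Q - 1" using x top \<open>0 < Q\<close> by simp
    then show False using assms by simp
  qed
  ultimately have small: "Q*L + H < Q*Q - 1" using top by linarith
  have "Q*Q*H = (Q*Q - 1)*H + H"
    using \<open>0 < Q\<close> by (simp add: diff_mult_distrib)
  then have "Q*x = (Q*L + H) + (Q*Q - 1)*H"
    using x by (simp add: algebra_simps)
  then have "(Q*x) mod (Q*Q - 1) = Q*L + H" using small by simp
  then show ?thesis unfolding L_def H_def by simp
qed

lemma less_mult_mod_square_minus_one_iff:
  fixes Q x :: nat
  assumes "x < Q*Q - 1"
  shows "x < (Q*x) mod (Q*Q - 1) \<longleftrightarrow> x div Q < x mod Q"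
proof -
  define L H where "L = x mod Q" and "H = x div Q"
  have "2 \<le> Q" using assms by (cases "2 \<le> Q") (auto simp: not_le less_2_cases_iff)
  have "x = L + Q*H" unfolding L_def H_def by (rule mod_mult_div_eq[symmetric])
  moreover have "(Q*x) mod (Q*Q - 1) = H + Q*L"
    using mult_mod_square_minus_one[OF assms] unfolding L_def H_def by simp
  moreover have "L + Q*H < H + Q*L \<longleftrightarrow> H < L"
  proof -
    have "L + Q*H < H + Q*L \<longleftrightarrow> int L + int Q * int H < int H + int Q * int L"
      by (simp only: of_nat_add [symmetric] of_nat_mult [symmetric] of_nat_less_iff)
    also have "\<dots> \<longleftrightarrow> (int Q - 1) * int H < (int Q - 1) * int L"
      by (simp add: algebra_simps)
    finally show ?thesis using \<open>2 \<le> Q\<close> by simp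
  qed
  ultimately show ?thesis unfolding L_def H_def by simp
qed

lemma div_less_mod_between_multiples_iff:
  fixes Q c x :: nat
  assumes lower: "c*(Q + 1) < x" and upper: "x < (c + 1)*(Q + 1)"
  shows "x div Q < x mod Q \<longleftrightarrow> x div Q = c \<and> c < x mod Q"
proof
  define L H where "L = x mod Q" and "H = x div Q"
  have "0 < Q" using lower upper by (cases Q) simp_all
  then have x: "x = L + Q*H" and "L < Q" unfolding L_def H_def by simp_all
  assume "x div Q < x mod Q"
  then have "H < L" unfolding L_def H_def .
  have "H = c"
  proof (cases c H rule: linorder_cases)
    case less
    then have "Q*(c + 1) \<le> Q*H" by (intro mult_le_mono2) simp
    with \<open>H < L\<close> less x upper show ?thesis by (simp add: algebra_simps)
  next
    case greater
    then have "Q*(H + 1) \<le> Q*c" by (intro mult_le_mono2) simp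
    with \<open>L < Q\<close> x lower show ?thesis by (simp add: algebra_simps)
  qed simp
  with \<open>H < L\<close> show "x div Q = c \<and> c < x mod Q" unfolding L_def H_def by simp
qed simp

lemma base_digits_less_iff:
  fixes q a b i j :: nat
  assumes "a < q" "i < q"
  shows "a + b*q < i + j*q \<longleftrightarrow> b < j \<or> (b = j \<and> a < i)"
proof (cases b j rule: linorder_cases)
  case less
  then have "b*q + q \<le> j*q" by (metis Suc_leI add.commute mult_Suc mult_le_mono1)
  with assms less show ?thesis by simp
next
  case greater
  then have "j*q + q \<le> b*q" by (metis Suc_leI add.commute mult_Suc mult_le_mono1)
  with assms greater show ?thesis by simp
qed simp

lemma greater_two_digit_numbers:
  fixes q a b :: nat
  assumes "a < q" "b < q"
  shows "{i + j*q | i j. (i < q \<and> b < j \<and> j < q) \<or> (a < i \<and> i < q \<and> j = b)}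
       = {L. a + b*q < L \<and> L < q^2}"
proof (intro set_eqI iffI)
  fix L assume "L \<in> {i + j*q | i j. (i < q \<and> b < j \<and> j < q) \<or> (a < i \<and> i < q \<and> j = b)}"
  then obtain i j where "L = i + j*q" and "(i < q \<and> b < j \<and> j < q) \<or> (a < i \<and> i < q \<and> j = b)"
    by blast
  then show "L \<in> {L. a + b*q < L \<and> L < q^2}"
    using base_digits_less_iff[of a q i b j] two_digit_less[of i q j] assms by auto
next
  fix L assume "L \<in> {L. a + b*q < L \<and> L < q^2}"
  then have L: "a + b*q < L" "L < q^2" by simp_all
  define i j where "i = L mod q" and "j = L div q"
  have "0 < q" using assms by simp
  then have "L = i + j*q" "i < q" unfolding i_def j_def by simp_all
  moreover have "j < q" using L(2) unfolding j_def by (simp add: less_mult_imp_div_less power2_eq_square)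
  moreover have "b < j \<or> (b = j \<and> a < i)"
    using base_digits_less_iff[OF assms(1) \<open>i < q\<close>] L(1) \<open>L = i + j*q\<close> by simp
  ultimately show "L \<in> {i + j*q | i j. (i < q \<and> b < j \<and> j < q) \<or> (a < i \<and> i < q \<and> j = b)}"
    by blast
qed

lemma qadic4_eq: "qadic4 q i j a b = (i + j*q) + q^2*(a + b*q)"
  unfolding qadic4_def by (simp add: algebra_simps power2_eq_square power3_eq_cube)

lemma qadic4_diagonal: "qadic4 q a b a b = (a + b*q)*(q^2 + 1)"
  unfolding qadic4_eq by (simp add: algebra_simps)

lemma min_rep_card_2_iff: "min_rep q n x \<and> card (cyc_coset q n x) = 2 \<longleftrightarrow> x < (q^2*x) mod n"
  unfolding min_rep_def cyc_coset_def by (cases "x = (q^2*x) mod n") (auto simp: min_def)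

lemma less_mult_mod_between_multiples_eq:
  fixes Q c :: nat
  assumes "c + 1 < Q"
  shows "{x. x < Q*Q - 1 \<and> c*(Q + 1) < x \<and> x < (c + 1)*(Q + 1) \<and> x < (Q*x) mod (Q*Q - 1)}
       = (\<lambda>L. L + Q*c) ` {c<..<Q}"
proof (intro set_eqI iffI)
  fix x
  assume "x \<in> {x. x < Q*Q - 1 \<and> c*(Q + 1) < x \<and> x < (c + 1)*(Q + 1) \<and> x < (Q*x) mod (Q*Q - 1)}"
  then have "x div Q = c" "c < x mod Q"
    using less_mult_mod_square_minus_one_iff div_less_mod_between_multiples_iff by auto
  moreover have "x mod Q < Q" using assms by simp
  ultimately show "x \<in> (\<lambda>L. L + Q*c) ` {c<..<Q}"
    by (intro image_eqI[of _ _ "x mod Q"]) (auto simp: mod_mult_div_eq)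
next
  fix x assume "x \<in> (\<lambda>L. L + Q*c) ` {c<..<Q}"
  then obtain L where x: "x = L + Q*c" and L: "c < L" "L < Q" by auto
  then have digits: "x div Q = c" "x mod Q = L" by simp_all
  have "Q*(c + 1) \<le> Q*(Q - 1)" using assms by (intro mult_le_mono2) simp
  then have "x < Q*Q - 1" using x L by (simp add: algebra_simps diff_mult_distrib2)
  moreover have "c*(Q + 1) < x" "x < (c + 1)*(Q + 1)" using x L by (simp_all add: algebra_simps)
  ultimately show "x \<in> {x. x < Q*Q - 1 \<and> c*(Q + 1) < x \<and> x < (c + 1)*(Q + 1) \<and> x < (Q*x) mod (Q*Q - 1)}"
    using less_mult_mod_square_minus_one_iff digits L by simp
qed

lemma less_mult_mod_between_diagonals_eq:
  fixes q a b :: nat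
  assumes "a < q" "b < q" "a + b*q + 1 < q^2"
  shows "{x. x < q^4 - 1 \<and> (a + b*q)*(q^2 + 1) < x \<and> x < (a + b*q + 1)*(q^2 + 1)
              \<and> x < (q^2*x) mod (q^4 - 1)}
       = {qadic4 q i j a b | i j. (i < q \<and> b < j \<and> j < q) \<or> (a < i \<and> i < q \<and> j = b)}"
proof -
  have "q^4 = q^2*q^2" by algebra
  then have "{x. x < q^4 - 1 \<and> (a + b*q)*(q^2 + 1) < x \<and> x < (a + b*q + 1)*(q^2 + 1)
              \<and> x < (q^2*x) mod (q^4 - 1)}
      = (\<lambda>L. L + q^2*(a + b*q)) ` {a + b*q<..<q^2}"
    using less_mult_mod_between_multiples_eq[OF assms(3)] by simp
  also have "{a + b*q<..<q^2} = {i + j*q | i j. (i < q \<and> b < j \<and> j < q) \<or> (a < i \<and> i < q \<and> j = b)}"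
    using greater_two_digit_numbers[OF assms(1,2)] by auto
  finally show ?thesis unfolding qadic4_eq by blast
qed

theorem mainTheorem13:
  fixes q :: nat
  assumes "prime_power q"
  shows "(\<forall>a b. a < q - 1 \<and> b < q \<longrightarrow>
            interlude1 q a b =
              {qadic4 q i j a b | i j. (i < q \<and> b < j \<and> j < q) \<or> (a < i \<and> i < q \<and> j = b)})
       \<and> (\<forall>b. b \<le> q - 2 \<longrightarrow>
            interlude2 q b = {qadic4 q i j (q - 1) b | i j. i < q \<and> b < j \<and> j < q})"
proof (intro conjI allI impI)
  fix a b assume ab: "a < q - 1 \<and> b < q"
  then have "a < q" "a + 1 < q" "b < q" by linarith+
  then have "a + b*q + 1 < q^2" using two_digit_less by fastforce
  then show "interlude1 q a b =
      {qadic4 q i j a b | i j. (i < q \<and> b < j \<and> j < q) \<or> (a < i \<and> i < q \<and> j = b)}"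
    using less_mult_mod_between_diagonals_eq[OF \<open>a < q\<close> \<open>b < q\<close>]
    unfolding interlude1_def min_rep_card_2_iff qadic4_diagonal by simp
next
  have "2 \<le> q" using assms by (rule prime_power_ge_2)
  fix b assume "b \<le> q - 2"
  then have "q - 1 < q" "b < q" "b + 1 < q" using \<open>2 \<le> q\<close> by linarith+
  have next_diagonal: "q - 1 + b*q + 1 = 0 + (b + 1)*q" using \<open>2 \<le> q\<close> by simp
  then have "q - 1 + b*q + 1 < q^2" using two_digit_less[of 0 q "b + 1"] \<open>b + 1 < q\<close> by simp
  have "interlude2 q b = {x. x < q^4 - 1 \<and> (q - 1 + b*q)*(q^2 + 1) < x
          \<and> x < (q - 1 + b*q + 1)*(q^2 + 1) \<and> x < (q^2*x) mod (q^4 - 1)}"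
    unfolding interlude2_def qadic4_diagonal next_diagonal ..
  also have "\<dots> = {qadic4 q i j (q - 1) b | i j.
                     (i < q \<and> b < j \<and> j < q) \<or> (q - 1 < i \<and> i < q \<and> j = b)}"
    by (rule less_mult_mod_between_diagonals_eq) fact+
  also have "\<dots> = {qadic4 q i j (q - 1) b | i j. i < q \<and> b < j \<and> j < q}"
    by auto
  finally show "interlude2 q b = {qadic4 q i j (q - 1) b | i j. i < q \<and> b < j \<and> j < q}" .
qed

end
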